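(* Let $(\mathsf{E},\mathcal{F},\mu)$ be a probability space and let $P_{1}$ and $(P_{2,\iota})_{\iota>0}$ be $\mu$-invariant Markov kernels. Let $\Phi:\mathrm{L}^{2}(\mu)\to[0,\infty]$ with $a:=\sup_{f\in\mathrm{L}_{0}^{2}(\mu)\setminus\{0\}}\|f\|_{2}^{2}/\Phi(f)\in(0,\infty)$ satisfy $\Phi(cf)=c^{2}\Phi(f)$, $\|f-\mu(f)\|_{2}^{2}\le a\Phi(f-\mu(f))$ and non-expansivity $\Phi(T^{n}f)\le\Phi(f)$ for $T\in\{P_{1}\}\cup\{P_{2,\iota}\}_{\iota>0}$. Assume $P_{1}$ satisfies a super-Poincaré inequality with function $\beta_{1}$ and that for every $\iota>0$, \[ \|f\|_{2}^{2}\le s\,\mathcal{E}(P_{2,\iota}^{*}P_{2,\iota},f)+\beta_{2,\iota}(s)\Phi(f)\qquad\forall s>0,\ f\in\mathrm{L}_{0}^{2}(\mu), \] where $\beta_{1},\beta_{2,\iota}:(0,\infty)\to[0,\infty)$ are decreasing and tend to $0$ at $\infty$. For $\beta\in\{\beta_{1},\beta_{2,\iota}\}$ let $K(u)=u\beta(1/u)$, $K(0)=0$, $K^{*}(v)=\sup_{u\ge0}\{uv-K(u)\}$, $F(x)=\int_{x}^{a}\mathrm{d}v/K^{*}(v)$ for $x\in(0,a]$, giving $F_{1}$ and $F_{2,\iota}$, with inverses $F_{1}^{-1},F_{2,\iota}^{-1}:[0,\infty)\to(0,a]$ (so $F^{-1}(0)=a$). Assume that $\beta_{2,\iota}\ge\beta_{1}$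 pointwise for every $\iota>0$ and that $\lim_{\iota\to0}\beta_{2,\iota}(s)=\beta_{1}(s)$ for every $s>0$. Then for every $\iota>0$ and $n\in\mathbb{N}$, $F_{2,\iota}^{-1}(n)\ge F_{1}^{-1}(n)$, and \[ \lim_{\iota\to0}\sup_{n\ge0}\big\{F_{2,\iota}^{-1}(n)-F_{1}^{-1}(n)\big\}=0. \]
   Context: A kernel $P$ satisfies a super-Poincaré inequality with function $\beta$ (decreasing, $\beta(s)\downarrow0$) if $\|f\|_{2}^{2}\le s\,\mathcal{E}(P^{*}P,f)+\beta(s)\Phi(f)$ for all $s>0$, $f\in\mathrm{L}_{0}^{2}(\mu)$. $\mathcal{E}(T,f)=\langle(\mathrm{Id}-T)f,f\rangle$ in $\mathrm{L}^{2}(\mu)$, $P^{*}$ is the adjoint, and $\mathrm{L}_{0}^{2}(\mu)$ is the mean-zero subspace. *)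

theory Defs
  imports "HOL-Probability.Probability"
begin

definition L2 :: "'a measure \<Rightarrow> ('a \<Rightarrow> real) set" where
  "L2 M = {f. f \<in> borel_measurable M \<and> integrable M (\<lambda>x. (f x)\<^sup>2)}"

definition L20 :: "'a measure \<Rightarrow> ('a \<Rightarrow> real) set" where
  "L20 M = {f \<in> L2 M. (\<integral>x. f x \<partial>M) = 0}"

definition sqnorm :: "'a measure \<Rightarrow> ('a \<Rightarrow> real) \<Rightarrow> real" where
  "sqnorm M f = (\<integral>x. (f x)\<^sup>2 \<partial>M)"

definition invariant_markov_kernel :: "'a measure \<Rightarrow> ('a \<Rightarrow> 'a measure) \<Rightarrow> bool" where
  "invariant_markov_kernel M P \<longleftrightarrow> P \<in> M \<rightarrow>\<^sub>M prob_algebra M \<and> M \<bind> P = M"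

definition kapply :: "('a \<Rightarrow> 'a measure) \<Rightarrow> ('a \<Rightarrow> real) \<Rightarrow> 'a \<Rightarrow> real" where
  "kapply P f = (\<lambda>x. \<integral>y. f y \<partial>(P x))"

text \<open>Dirichlet form E(P^*P, f) = <f,f> - <P^*P f, f> = ||f||^2 - ||P f||^2.\<close>
definition dirichlet_PstarP :: "'a measure \<Rightarrow> ('a \<Rightarrow> 'a measure) \<Rightarrow> ('a \<Rightarrow> real) \<Rightarrow> real" where
  "dirichlet_PstarP M P f = sqnorm M f - sqnorm M (kapply P f)"

definition super_poincare ::
  "'a measure \<Rightarrow> ('a \<Rightarrow> 'a measure) \<Rightarrow> (real \<Rightarrow> real) \<Rightarrow> (('a \<Rightarrow> real) \<Rightarrow> ennreal) \<Rightarrow> bool" where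
  "super_poincare M P \<beta> \<Phi> \<longleftrightarrow>
     (\<forall>s>0. \<forall>f\<in>L20 M.
        ennreal (sqnorm M f) \<le> ennreal (s * dirichlet_PstarP M P f) + ennreal (\<beta> s) * \<Phi> f)"

definition admissible_beta :: "(real \<Rightarrow> real) \<Rightarrow> bool" where
  "admissible_beta \<beta> \<longleftrightarrow> (\<forall>s>0. \<beta> s \<ge> 0) \<and> (\<forall>s t. 0 < s \<longrightarrow> s \<le> t \<longrightarrow> \<beta> t \<le> \<beta> s)
     \<and> (\<beta> \<longlongrightarrow> 0) at_top"

definition Kfun :: "(real \<Rightarrow> real) \<Rightarrow> real \<Rightarrow> real" where
  "Kfun \<beta> u = (if u = 0 then 0 else u * \<beta> (1 / u))"

text \<open>Convex conjugate K^*(v) = sup_{u>=0} (u v - K u), valued in [0,inf]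
  (the supremum is >= 0 because of u = 0).\<close>
definition Kstar :: "(real \<Rightarrow> real) \<Rightarrow> real \<Rightarrow> ennreal" where
  "Kstar \<beta> v = (SUP u\<in>{0..}. ennreal (u * v - Kfun \<beta> u))"

definition Ffun :: "(real \<Rightarrow> real) \<Rightarrow> real \<Rightarrow> real \<Rightarrow> ennreal" where
  "Ffun \<beta> a x = (\<integral>\<^sup>+ v \<in> {x..a}. (1 / Kstar \<beta> v) \<partial>lborel)"

definition Finv :: "(real \<Rightarrow> real) \<Rightarrow> real \<Rightarrow> real \<Rightarrow> real" where
  "Finv \<beta> a t = (THE x. x \<in> {0<..a} \<and> Ffun \<beta> a x = ennreal t)"

end

theory Submission
  imports Defs
begin

text \<open>
  Since \<open>\<E>(P\<^sup>*P, f) \<le> \<parallel>f\<parallel>\<^sup>2\<close>, a super-Poincare inequality gives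
  \<open>(1 - s) \<parallel>f\<parallel>\<^sup>2 \<le> \<beta>(s) \<Phi>(f)\<close>, and the optimality of \<open>a\<close> turns this into
  \<open>\<beta>(s) \<ge> (1 - s) a\<close> for \<open>0 < s < 1\<close>. Hence \<open>K\<^sup>*(v) \<le> 2 v\<close> on \<open>[0, a]\<close>, so \<open>F\<close> blows up
  at \<open>0\<close>; since \<open>\<beta> \<rightarrow> 0\<close> makes \<open>K\<^sup>*\<close> positive on \<open>(0, a]\<close>, \<open>F\<close> is a continuous strictly
  decreasing bijection from \<open>(0, a]\<close> onto \<open>[0, \<infinity>)\<close>. A larger \<open>\<beta>\<close> has a smaller \<open>K\<^sup>*\<close> and
  a larger \<open>F\<close>, which gives the inequality between the inverses. Pointwise convergence of the
  \<open>\<beta>\<^sub>2\<^sub>,\<^sub>\<iota>\<close> gives convergence of their conjugates, then of the \<open>F\<close>'s by dominated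
  convergence, and so of the inverses at each \<open>n\<close>. This convergence is uniform in \<open>n\<close>
  because all the inverses decrease in \<open>n\<close> and \<open>F\<^sub>1\<^sup>-\<^sup>1(n) \<rightarrow> 0\<close>.
\<close>

lemma dirichlet_PstarP_le_sqnorm: "dirichlet_PstarP M P f \<le> sqnorm M f"
  unfolding dirichlet_PstarP_def sqnorm_def by simp

lemma super_poincare_sqnorm_le:
  assumes spi: "super_poincare M P \<beta> \<Phi>" and f: "f \<in> L20 M" and s: "0 < s" "s < 1"
  shows "ennreal ((1 - s) * sqnorm M f) \<le> ennreal (\<beta> s) * \<Phi> f"
proof -
  have q: "0 \<le> sqnorm M f" unfolding sqnorm_def by simp
  have "ennreal (s * sqnorm M f) + ennreal ((1 - s) * sqnorm M f) = ennreal (sqnorm M f)"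
    using q s by (subst ennreal_plus[symmetric]) (auto simp: algebra_simps intro: mult_left_le_one_le)
  also have "\<dots> \<le> ennreal (s * dirichlet_PstarP M P f) + ennreal (\<beta> s) * \<Phi> f"
    using spi f s unfolding super_poincare_def by blast
  also have "\<dots> \<le> ennreal (s * sqnorm M f) + ennreal (\<beta> s) * \<Phi> f"
    using s dirichlet_PstarP_le_sqnorm by (intro add_right_mono ennreal_leI mult_left_mono) auto
  finally show ?thesis by (simp add: ennreal_add_left_cancel_le)
qed

lemma super_poincare_beta_lower_bound:
  assumes a: "(SUP f\<in>{f \<in> L20 M. \<not> (AE x in M. f x = 0)}. ennreal (sqnorm M f) / \<Phi> f) = ennreal a"
    and spi: "super_poincare M P \<beta> \<Phi>" and s: "0 < s" "s < 1" and \<beta>: "0 \<le> \<beta> s"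
  shows "(1 - s) * a \<le> \<beta> s"
proof -
  have "ennreal (sqnorm M f) / \<Phi> f \<le> ennreal (\<beta> s / (1 - s))" if f: "f \<in> L20 M" for f
  proof -
    have "ennreal (sqnorm M f) = ennreal (1 / (1 - s)) * ennreal ((1 - s) * sqnorm M f)"
      using s by (subst ennreal_mult[symmetric]) (auto simp: sqnorm_def)
    also have "\<dots> \<le> ennreal (1 / (1 - s)) * (ennreal (\<beta> s) * \<Phi> f)"
      using super_poincare_sqnorm_le[OF spi f s] by (rule mult_left_mono) simp
    also have "\<dots> = ennreal (\<beta> s / (1 - s)) * \<Phi> f"
      using s \<beta> by (simp add: mult.assoc[symmetric] ennreal_mult[symmetric])
    finally show ?thesis
      by (metis divide_le_posI_ennreal ennreal_zero_divide mult.commute mult_eq_0_iff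
          not_gr_zero zero_order(1,2))
  qed
  then have "ennreal a \<le> ennreal (\<beta> s / (1 - s))"
    unfolding a[symmetric] by (intro SUP_least) auto
  then have "a \<le> \<beta> s / (1 - s)"
    using s \<beta> by (subst (asm) ennreal_le_iff) auto
  then show ?thesis
    using s by (simp add: field_simps)
qed

lemma ennreal_one_divide_antimono: "(x::ennreal) \<le> y \<Longrightarrow> 1 / y \<le> 1 / x"
proof (cases x; cases y)
  fix r s assume *: "x = ennreal r" "y = ennreal s" "0 \<le> r" "0 \<le> s" "x \<le> y"
  show ?thesis
  proof (cases "r = 0")
    case False
    then have "r > 0" "s > 0" "r \<le> s" using * by auto
    then show ?thesis using * divide_ennreal[of 1 s] divide_ennreal[of 1 r]
      by (auto simp flip: ennreal_1 intro!: ennreal_leI divide_left_mono)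
  qed (use * in auto)
qed (auto simp: top_unique)

lemma Kstar_mono: "v \<le> w \<Longrightarrow> Kstar \<beta> v \<le> Kstar \<beta> w"
  unfolding Kstar_def
  by (rule SUP_subset_mono[OF order_refl]) (auto intro!: ennreal_leI mult_left_mono)

lemma Kstar_antimono_beta: "(\<And>s. s > 0 \<Longrightarrow> \<beta> s \<le> \<beta>' s) \<Longrightarrow> Kstar \<beta>' v \<le> Kstar \<beta> v"
  unfolding Kstar_def Kfun_def
  by (rule SUP_subset_mono[OF order_refl]) (auto intro!: ennreal_leI mult_left_mono)

lemma Kstar_pos:
  assumes \<beta>: "(\<beta> \<longlongrightarrow> 0) at_top" and v: "v > 0"
  shows "0 < Kstar \<beta> v"
proof -
  obtain s0 where s0: "\<And>s. s \<ge> s0 \<Longrightarrow> \<beta> s < v"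
    using order_tendstoD(2)[OF \<beta> v] by (auto simp: eventually_at_top_linorder)
  define s where "s = max s0 1"
  have s: "s > 0" "\<beta> s < v" using s0 by (auto simp: s_def)
  have "0 < ennreal ((1/s) * v - Kfun \<beta> (1/s))"
    using s by (auto simp: Kfun_def field_simps)
  also have "\<dots> \<le> Kstar \<beta> v"
    unfolding Kstar_def by (rule SUP_upper) (use s in auto)
  finally show ?thesis .
qed

definition admissible_beta_above :: "real \<Rightarrow> (real \<Rightarrow> real) \<Rightarrow> bool" where
  "admissible_beta_above a \<beta> \<longleftrightarrow>
     0 < a \<and> admissible_beta \<beta> \<and> (\<forall>s. 0 < s \<longrightarrow> s < 1 \<longrightarrow> (1 - s) * a \<le> \<beta> s)"

lemma Kstar_le_double:
  assumes \<beta>: "admissible_beta_above a \<beta>" and v: "0 \<le> v" "v \<le> a"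
  shows "Kstar \<beta> v \<le> ennreal (2 * v)"
  unfolding Kstar_def
proof (rule SUP_least, rule ennreal_leI)
  fix u :: real assume "u \<in> {0..}"
  then have u: "u \<ge> 0" by auto
  have nonneg: "\<And>s. s > 0 \<Longrightarrow> \<beta> s \<ge> 0" and lb: "\<And>s. 0 < s \<Longrightarrow> s < 1 \<Longrightarrow> (1 - s) * a \<le> \<beta> s"
    and "a > 0"
    using \<beta> unfolding admissible_beta_above_def admissible_beta_def by auto
  show "u * v - Kfun \<beta> u \<le> 2 * v"
  proof (cases "u \<le> 2")
    case True
    have "Kfun \<beta> u \<ge> 0" using nonneg u by (auto simp: Kfun_def)
    moreover have "u * v \<le> 2 * v" using True v by (intro mult_right_mono) auto
    ultimately show ?thesis by linarith
  next
    case False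
    then have "u * ((1 - 1/u) * a) \<le> u * \<beta> (1/u)"
      by (intro mult_left_mono lb) auto
    then have "u * a - a \<le> Kfun \<beta> u" using False by (auto simp: Kfun_def algebra_simps)
    moreover have "u * (v - a) \<le> 2 * (v - a)" using False v by (intro mult_right_mono_neg) auto
    ultimately show ?thesis using \<open>a > 0\<close> by (simp add: algebra_simps)
  qed
qed

lemma one_divide_Kstar_finite:
  "admissible_beta_above a \<beta> \<Longrightarrow> 0 < x \<Longrightarrow> 1 / Kstar \<beta> x < top"
  using Kstar_pos[of \<beta> x]
  by (simp add: admissible_beta_above_def admissible_beta_def divide_ennreal_def less_top[symmetric])

lemma one_divide_Kstar_pos:
  "admissible_beta_above a \<beta> \<Longrightarrow> 0 \<le> x \<Longrightarrow> x \<le> a \<Longrightarrow> 0 < 1 / Kstar \<beta> x"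
  using Kstar_le_double[of a \<beta> x] by (simp add: ennreal_zero_less_divide le_less_trans)

lemma borel_measurable_one_divide_Kstar: "(\<lambda>v. 1 / Kstar \<beta> v) \<in> borel_measurable borel"
proof (rule borel_measurableI_greater)
  fix y :: ennreal
  have "is_interval {x. y < 1 / Kstar \<beta> x}"
    unfolding is_interval_1
    using ennreal_one_divide_antimono[OF Kstar_mono] by (blast intro: less_le_trans)
  then show "{x \<in> space borel. y < 1 / Kstar \<beta> x} \<in> sets borel"
    by (auto intro: real_interval_borel_measurable)
qed

lemma set_nn_integral_one_divide_Kstar_bounds:
  assumes "S \<subseteq> {x..y}" "S \<in> sets borel"
  shows "emeasure lborel S * (1 / Kstar \<beta> y) \<le> (\<integral>\<^sup>+ v \<in> S. (1 / Kstar \<beta> v) \<partial>lborel)"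
    and "(\<integral>\<^sup>+ v \<in> S. (1 / Kstar \<beta> v) \<partial>lborel) \<le> emeasure lborel S * (1 / Kstar \<beta> x)"
proof -
  have "(\<integral>\<^sup>+ v. (1 / Kstar \<beta> y) * indicator S v \<partial>lborel) \<le> (\<integral>\<^sup>+ v \<in> S. (1 / Kstar \<beta> v) \<partial>lborel)"
    "(\<integral>\<^sup>+ v \<in> S. (1 / Kstar \<beta> v) \<partial>lborel) \<le> (\<integral>\<^sup>+ v. (1 / Kstar \<beta> x) * indicator S v \<partial>lborel)"
    using assms(1)
    by (auto simp: indicator_def intro!: nn_integral_mono ennreal_one_divide_antimono Kstar_mono)
  moreover have "(\<integral>\<^sup>+ v. c * indicator S v \<partial>lborel) = emeasure lborel S * c" for c
    using assms(2) by (simp add: nn_integral_cmult_indicator mult.commute)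
  ultimately show "emeasure lborel S * (1 / Kstar \<beta> y) \<le> (\<integral>\<^sup>+ v \<in> S. (1 / Kstar \<beta> v) \<partial>lborel)"
    "(\<integral>\<^sup>+ v \<in> S. (1 / Kstar \<beta> v) \<partial>lborel) \<le> emeasure lborel S * (1 / Kstar \<beta> x)"
    by simp_all
qed

abbreviation Fpiece :: "(real \<Rightarrow> real) \<Rightarrow> real \<Rightarrow> real \<Rightarrow> ennreal" where
  "Fpiece \<beta> x y \<equiv> (\<integral>\<^sup>+ v \<in> {x..<y}. (1 / Kstar \<beta> v) \<partial>lborel)"

lemma Ffun_split:
  assumes "x \<le> y" "y \<le> a"
  shows "Ffun \<beta> a x = Fpiece \<beta> x y + Ffun \<beta> a y"
proof -
  have "Ffun \<beta> a x = (\<integral>\<^sup>+ v. (1 / Kstar \<beta> v) * indicator {x..<y} v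
                                + (1 / Kstar \<beta> v) * indicator {y..a} v \<partial>lborel)"
    unfolding Ffun_def
    by (rule nn_integral_cong) (use assms in \<open>auto simp: indicator_def\<close>)
  also have "\<dots> = Fpiece \<beta> x y + Ffun \<beta> a y"
    unfolding Ffun_def using borel_measurable_one_divide_Kstar
    by (subst nn_integral_add) auto
  finally show ?thesis .
qed

lemma Fpiece_lower: "x \<le> y \<Longrightarrow> ennreal (y - x) * (1 / Kstar \<beta> y) \<le> Fpiece \<beta> x y"
  using set_nn_integral_one_divide_Kstar_bounds(1)[of "{x..<y}" x y \<beta>] by (simp add: subset_eq)

lemma Fpiece_upper: "x \<le> y \<Longrightarrow> Fpiece \<beta> x y \<le> ennreal (y - x) * (1 / Kstar \<beta> x)"
  using set_nn_integral_one_divide_Kstar_bounds(2)[of "{x..<y}" x y \<beta>] by (simp add: subset_eq)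

lemma Ffun_upper: "x \<le> a \<Longrightarrow> Ffun \<beta> a x \<le> ennreal (a - x) * (1 / Kstar \<beta> x)"
  using set_nn_integral_one_divide_Kstar_bounds(2)[of "{x..a}" x a \<beta>] by (simp add: Ffun_def)

lemma Ffun_right_endpoint [simp]: "Ffun \<beta> a a = 0"
  using Ffun_upper[of a a \<beta>] by simp

lemma Ffun_finite: "admissible_beta_above a \<beta> \<Longrightarrow> 0 < x \<Longrightarrow> x \<le> a \<Longrightarrow> Ffun \<beta> a x < top"
  using Ffun_upper[of x a \<beta>] one_divide_Kstar_finite[of a \<beta> x]
  by (metis ennreal_less_top ennreal_mult_less_top le_less_trans)

lemma Ffun_antimono: "x \<le> y \<Longrightarrow> y \<le> a \<Longrightarrow> Ffun \<beta> a y \<le> Ffun \<beta> a x"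
  using Ffun_split[of x y a \<beta>] by simp

lemma Ffun_strict_antimono:
  assumes \<beta>: "admissible_beta_above a \<beta>" and xy: "0 < x" "x < y" "y \<le> a"
  shows "Ffun \<beta> a y < Ffun \<beta> a x"
proof -
  have "0 < ennreal (y - x) * (1 / Kstar \<beta> y)"
    using one_divide_Kstar_pos[OF \<beta>, of y] xy by (simp add: ennreal_zero_less_mult_iff)
  also have "\<dots> \<le> Fpiece \<beta> x y" using Fpiece_lower xy by simp
  finally have "Ffun \<beta> a y + 0 < Ffun \<beta> a y + Fpiece \<beta> x y"
    using Ffun_finite[OF \<beta>, of y] xy by (subst ennreal_add_left_cancel_less) auto
  also have "\<dots> = Ffun \<beta> a x" using Ffun_split[of x y a \<beta>] xy by (simp add: add.commute)
  finally show ?thesis by simp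
qed

lemma Ffun_le_Ffun_iff:
  assumes \<beta>: "admissible_beta_above a \<beta>" and "x \<in> {0<..a}" "y \<in> {0<..a}"
  shows "Ffun \<beta> a x \<le> Ffun \<beta> a y \<longleftrightarrow> y \<le> x"
  using assms Ffun_antimono[of y x a \<beta>] Ffun_strict_antimono[OF \<beta>, of x y]
  by (auto simp: not_le[symmetric])

lemma Ffun_less_Ffun_iff:
  assumes "admissible_beta_above a \<beta>" "x \<in> {0<..a}" "y \<in> {0<..a}"
  shows "Ffun \<beta> a x < Ffun \<beta> a y \<longleftrightarrow> y < x"
  using Ffun_le_Ffun_iff[OF assms(1,3,2)] by (simp add: not_le[symmetric])

lemma Ffun_lipschitz:
  assumes \<beta>: "admissible_beta_above a \<beta>" and x0: "0 < x0"
  shows "lipschitz_on (enn2real (1 / Kstar \<beta> x0)) {x0..a} (\<lambda>x. enn2real (Ffun \<beta> a x))"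
proof -
  define L where "L = enn2real (1 / Kstar \<beta> x0)"
  have L: "1 / Kstar \<beta> x0 = ennreal L"
    using one_divide_Kstar_finite[OF \<beta> x0] by (simp add: L_def ennreal_enn2real)
  have "0 \<le> L" by (simp add: L_def)
  have bound: "\<bar>enn2real (Ffun \<beta> a x) - enn2real (Ffun \<beta> a y)\<bar> \<le> L * (y - x)"
    if xy: "x0 \<le> x" "x \<le> y" "y \<le> a" for x y
  proof -
    have "Fpiece \<beta> x y \<le> ennreal (y - x) * (1 / Kstar \<beta> x0)"
      using Fpiece_upper[of x y \<beta>] xy
      by (meson Kstar_mono ennreal_one_divide_antimono mult_left_mono order_trans zero_le)
    also have "\<dots> = ennreal (L * (y - x))"
      using xy \<open>0 \<le> L\<close> by (simp add: L ennreal_mult mult.commute)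
    finally have piece: "Fpiece \<beta> x y \<le> ennreal (L * (y - x))" .
    have "enn2real (Ffun \<beta> a x) = enn2real (Fpiece \<beta> x y) + enn2real (Ffun \<beta> a y)"
      using Ffun_split[of x y a \<beta>] Ffun_finite[OF \<beta>, of y] le_less_trans[OF piece] xy x0
      by (simp add: enn2real_plus)
    moreover have "enn2real (Fpiece \<beta> x y) \<le> L * (y - x)"
      using enn2real_mono[OF piece] xy by (simp add: L_def)
    ultimately show ?thesis by simp
  qed
  show ?thesis
    unfolding L_def[symmetric]
  proof (rule lipschitz_onI)
    fix x y assume "x \<in> {x0..a}" "y \<in> {x0..a}"
    then show "dist (enn2real (Ffun \<beta> a x)) (enn2real (Ffun \<beta> a y)) \<le> L * dist x y"
      using bound[of x y] bound[of y x] by (cases "x \<le> y") (auto simp: dist_real_def abs_minus_commute)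
  qed (simp add: L_def)
qed

lemma Ffun_dyadic_lower:
  assumes \<beta>: "admissible_beta_above a \<beta>"
  shows "ennreal (real k / 4) \<le> Ffun \<beta> a (a / 2 ^ k)"
proof (induction k)
  case (Suc k)
  have "a > 0" using \<beta> by (simp add: admissible_beta_above_def)
  define x where "x = a / 2 ^ Suc k"
  have x: "0 < x" "2 * x = a / 2 ^ k" "2 * x \<le> a"
    using \<open>a > 0\<close> by (auto simp: x_def field_simps)
  have "ennreal (1 / 4) = ennreal x * (1 / ennreal (4 * x))"
    using x divide_ennreal[of 1 "4 * x"] by (simp flip: ennreal_1 ennreal_mult)
  also have "\<dots> \<le> ennreal x * (1 / Kstar \<beta> (2 * x))"
  proof -
    have "Kstar \<beta> (2 * x) \<le> ennreal (4 * x)"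
      using Kstar_le_double[OF \<beta>, of "2 * x"] x(1,3) by simp
    then show ?thesis by (intro mult_left_mono ennreal_one_divide_antimono) auto
  qed
  also have "\<dots> \<le> Fpiece \<beta> x (2 * x)"
    using Fpiece_lower[of x "2 * x" \<beta>] x(1) by simp
  finally have piece: "ennreal (1 / 4) \<le> Fpiece \<beta> x (2 * x)" .
  have "ennreal (real (Suc k) / 4) = ennreal (1 / 4) + ennreal (real k / 4)"
    by (simp add: ennreal_plus[symmetric] field_simps del: ennreal_plus)
  also have "\<dots> \<le> Fpiece \<beta> x (2 * x) + Ffun \<beta> a (2 * x)"
    using piece Suc.IH x by (intro add_mono) auto
  also have "\<dots> = Ffun \<beta> a x" using Ffun_split[of x "2 * x" a \<beta>] x by simp
  finally show ?case by (simp add: x_def)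
qed simp

lemma Ffun_surj:
  assumes \<beta>: "admissible_beta_above a \<beta>" and t: "0 \<le> t"
  obtains x where "x \<in> {0<..a}" "Ffun \<beta> a x = ennreal t"
proof -
  have "a > 0" using \<beta> by (simp add: admissible_beta_above_def)
  define k where "k = nat \<lceil>4 * t\<rceil>"
  define x0 where "x0 = a / 2 ^ k"
  have x0: "0 < x0" "x0 \<le> a" using \<open>a > 0\<close> by (auto simp: x0_def field_simps)
  have "t \<le> real k / 4" unfolding k_def by linarith
  then have "ennreal t \<le> Ffun \<beta> a x0"
    using Ffun_dyadic_lower[OF \<beta>, of k] unfolding x0_def by (meson ennreal_leI order_trans)
  have "t \<le> enn2real (Ffun \<beta> a x0)"
    using enn2real_mono[OF \<open>ennreal t \<le> Ffun \<beta> a x0\<close> Ffun_finite[OF \<beta> x0]] t by simp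
  then obtain x where x: "x0 \<le> x" "x \<le> a" "enn2real (Ffun \<beta> a x) = t"
    using IVT2'[of "\<lambda>x. enn2real (Ffun \<beta> a x)" a t x0] x0 t
      lipschitz_on_continuous_on[OF Ffun_lipschitz[OF \<beta> x0(1)]]
    by auto
  then have "Ffun \<beta> a x = ennreal t"
    using Ffun_finite[OF \<beta>, of x] x0 by (metis ennreal_enn2real less_le_trans)
  then show ?thesis using x x0 by (intro that[of x]) auto
qed

lemma Finv_eqI:
  assumes \<beta>: "admissible_beta_above a \<beta>" and x: "x \<in> {0<..a}" "Ffun \<beta> a x = ennreal t"
  shows "Finv \<beta> a t = x"
  unfolding Finv_def
proof (rule the_equality)
  fix y assume "y \<in> {0<..a} \<and> Ffun \<beta> a y = ennreal t"
  then show "y = x"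
    using Ffun_le_Ffun_iff[OF \<beta>, of x y] Ffun_le_Ffun_iff[OF \<beta>, of y x] x by auto
qed (use x in simp)

lemma Finv_mem: "admissible_beta_above a \<beta> \<Longrightarrow> 0 \<le> t \<Longrightarrow> Finv \<beta> a t \<in> {0<..a}"
  by (metis Ffun_surj Finv_eqI)

lemma Ffun_Finv: "admissible_beta_above a \<beta> \<Longrightarrow> 0 \<le> t \<Longrightarrow> Ffun \<beta> a (Finv \<beta> a t) = ennreal t"
  by (metis Ffun_surj Finv_eqI)

lemma Finv_le_iff:
  assumes \<beta>: "admissible_beta_above a \<beta>" and t: "0 \<le> t" and x: "x \<in> {0<..a}"
  shows "Finv \<beta> a t \<le> x \<longleftrightarrow> Ffun \<beta> a x \<le> ennreal t"
  using Ffun_le_Ffun_iff[OF \<beta> x Finv_mem[OF \<beta> t]] by (simp add: Ffun_Finv[OF \<beta> t])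

lemma Finv_less_iff:
  assumes \<beta>: "admissible_beta_above a \<beta>" and t: "0 \<le> t" and x: "x \<in> {0<..a}"
  shows "Finv \<beta> a t < x \<longleftrightarrow> Ffun \<beta> a x < ennreal t"
  using Ffun_less_Ffun_iff[OF \<beta> x Finv_mem[OF \<beta> t]] by (simp add: Ffun_Finv[OF \<beta> t])

lemma Finv_antimono:
  assumes \<beta>: "admissible_beta_above a \<beta>" and t: "0 \<le> t" "t \<le> t'"
  shows "Finv \<beta> a t' \<le> Finv \<beta> a t"
  using Finv_le_iff[OF \<beta> _ Finv_mem[OF \<beta> t(1)], of t'] t
  by (simp add: Ffun_Finv[OF \<beta> t(1)])

lemma Ffun_mono_beta: "(\<And>s. s > 0 \<Longrightarrow> \<beta> s \<le> \<beta>' s) \<Longrightarrow> Ffun \<beta> a x \<le> Ffun \<beta>' a x"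
  unfolding Ffun_def
  by (intro nn_integral_mono mult_right_mono ennreal_one_divide_antimono Kstar_antimono_beta) auto

lemma Finv_mono_beta:
  assumes \<beta>: "admissible_beta_above a \<beta>" and \<beta>': "admissible_beta_above a \<beta>'"
    and le: "\<And>s. s > 0 \<Longrightarrow> \<beta> s \<le> \<beta>' s" and t: "0 \<le> t"
  shows "Finv \<beta> a t \<le> Finv \<beta>' a t"
  using Finv_le_iff[OF \<beta> t Finv_mem[OF \<beta>' t]] Ffun_mono_beta[of \<beta> \<beta>' a "Finv \<beta>' a t", OF le]
  by (simp add: Ffun_Finv[OF \<beta>' t])

lemma Finv_tendsto_zero:
  assumes \<beta>: "admissible_beta_above a \<beta>"
  shows "(Finv \<beta> a \<longlongrightarrow> 0) at_top"
proof (rule order_tendstoI)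
  fix c :: real assume "c < 0"
  show "\<forall>\<^sub>F t in at_top. c < Finv \<beta> a t"
    using eventually_ge_at_top[of 0]
    by eventually_elim (use Finv_mem[OF \<beta>] \<open>c < 0\<close> in force)
next
  fix \<epsilon> :: real assume "0 < \<epsilon>"
  define x0 where "x0 = min (\<epsilon> / 2) a"
  have x0: "x0 \<in> {0<..a}" "x0 < \<epsilon>"
    using \<beta> \<open>0 < \<epsilon>\<close> by (auto simp: x0_def admissible_beta_above_def)
  have F: "Ffun \<beta> a x0 = ennreal (enn2real (Ffun \<beta> a x0))"
    using Ffun_finite[OF \<beta>] x0 by (simp add: ennreal_enn2real)
  show "\<forall>\<^sub>F t in at_top. Finv \<beta> a t < \<epsilon>"
    using eventually_ge_at_top[of "enn2real (Ffun \<beta> a x0)"]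
  proof eventually_elim
    case (elim t)
    then have t: "0 \<le> t" "enn2real (Ffun \<beta> a x0) \<le> t"
      using enn2real_nonneg[of "Ffun \<beta> a x0"] by linarith+
    then have "Ffun \<beta> a x0 \<le> ennreal t" by (subst F) (rule ennreal_leI)
    then have "Finv \<beta> a t \<le> x0" using Finv_le_iff[OF \<beta> t(1) x0(1)] by simp
    then show ?case using x0 by simp
  qed
qed

lemma Kstar_tendsto:
  fixes \<beta>' :: "'i \<Rightarrow> real \<Rightarrow> real"
  assumes le: "\<forall>\<^sub>F i in F. \<forall>s>0. \<beta> s \<le> \<beta>' i s"
    and lim: "\<And>s. s > 0 \<Longrightarrow> ((\<lambda>i. \<beta>' i s) \<longlongrightarrow> \<beta> s) F"
  shows "((\<lambda>i. Kstar (\<beta>' i) v) \<longlongrightarrow> Kstar \<beta> v) F"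
proof (rule order_tendstoI)
  fix c assume c: "Kstar \<beta> v < c"
  from le show "\<forall>\<^sub>F i in F. Kstar (\<beta>' i) v < c"
    by eventually_elim (metis Kstar_antimono_beta le_less_trans c)
next
  fix c assume "c < Kstar \<beta> v"
  then obtain u where u: "u \<ge> 0" "c < ennreal (u * v - Kfun \<beta> u)"
    unfolding Kstar_def by (auto simp: less_SUP_iff)
  then have "u > 0" by (cases "u = 0") (auto simp: Kfun_def)
  have "((\<lambda>i. ennreal (u * v - u * \<beta>' i (1 / u))) \<longlongrightarrow> ennreal (u * v - u * \<beta> (1 / u))) F"
    using \<open>u > 0\<close> by (intro tendsto_ennrealI tendsto_intros lim) auto
  moreover have "c < ennreal (u * v - u * \<beta> (1 / u))"
    using u \<open>u > 0\<close> by (simp add: Kfun_def)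
  ultimately have "\<forall>\<^sub>F i in F. c < ennreal (u * v - u * \<beta>' i (1 / u))"
    by (rule order_tendstoD(1))
  then show "\<forall>\<^sub>F i in F. c < Kstar (\<beta>' i) v"
  proof eventually_elim
    case (elim i)
    also have "ennreal (u * v - u * \<beta>' i (1 / u)) \<le> Kstar (\<beta>' i) v"
      unfolding Kstar_def using \<open>u > 0\<close> by (intro SUP_upper2[of u]) (auto simp: Kfun_def)
    finally show ?case .
  qed
qed

lemma Ffun_tendsto_sequentially:
  assumes K: "\<And>v. (\<lambda>n. Kstar (B n) v) \<longlonglongrightarrow> Kstar \<beta> v"
    and c: "0 < c" "\<And>n. ennreal c \<le> Kstar (B n) x"
  shows "(\<lambda>n. Ffun (B n) a x) \<longlonglongrightarrow> Ffun \<beta> a x"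
  unfolding Ffun_def
proof (rule nn_integral_dominated_convergence[where w = "\<lambda>v. ennreal (1 / c) * indicator {x..a} v"])
  have "1 / Kstar (B n) v \<le> ennreal (1 / c)" if "x \<le> v" for n v
  proof -
    have "1 / Kstar (B n) v \<le> 1 / ennreal c"
      using that c(2)[of n] by (meson Kstar_mono ennreal_one_divide_antimono order_trans)
    then show ?thesis
      using c(1) divide_ennreal[of 1 c] by (simp flip: ennreal_1)
  qed
  then show "AE v in lborel. 1 / Kstar (B n) v * indicator {x..a} v
              \<le> ennreal (1 / c) * indicator {x..a} v" for n
    by (intro AE_I2) (simp add: indicator_def)
  show "(\<integral>\<^sup>+ v. ennreal (1 / c) * indicator {x..a} v \<partial>lborel) < \<infinity>"
    by (cases "x \<le> a") (simp_all add: nn_integral_cmult_indicator ennreal_mult_less_top)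
  show "AE v in lborel. (\<lambda>n. 1 / Kstar (B n) v * indicator {x..a} v)
          \<longlonglongrightarrow> 1 / Kstar \<beta> v * indicator {x..a} v"
  proof (rule AE_I2)
    fix v
    have "(\<lambda>n. inverse (Kstar (B n) v)) \<longlonglongrightarrow> inverse (Kstar \<beta> v)"
      using continuous_on_tendsto_compose[OF continuous_on_inverse_ennreal[OF continuous_on_id[of UNIV]]
          K[of v]] by simp
    then show "(\<lambda>n. 1 / Kstar (B n) v * indicator {x..a} v) \<longlonglongrightarrow> 1 / Kstar \<beta> v * indicator {x..a} v"
      by (cases "v \<in> {x..a}") (auto simp: divide_ennreal_def)
  qed
qed (use borel_measurable_one_divide_Kstar in auto)

lemma Ffun_tendsto:
  fixes \<beta>' :: "real \<Rightarrow> real \<Rightarrow> real"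
  assumes \<beta>: "(\<beta> \<longlongrightarrow> 0) at_top"
    and le: "\<And>\<iota> s. \<iota> > 0 \<Longrightarrow> s > 0 \<Longrightarrow> \<beta> s \<le> \<beta>' \<iota> s"
    and lim: "\<And>s. s > 0 \<Longrightarrow> ((\<lambda>\<iota>. \<beta>' \<iota> s) \<longlongrightarrow> \<beta> s) (at_right 0)"
    and x: "0 < x"
  shows "((\<lambda>\<iota>. Ffun (\<beta>' \<iota>) a x) \<longlongrightarrow> Ffun \<beta> a x) (at_right 0)"
proof -
  have "\<forall>\<^sub>F \<iota> in at_right 0. \<forall>s>0. \<beta> s \<le> \<beta>' \<iota> s"
    using eventually_at_right_less[of 0] by eventually_elim (use le in auto)
  note Kstar_lim = Kstar_tendsto[OF this lim]
  obtain y where "0 < y" "y < Kstar \<beta> x" using dense[OF Kstar_pos[OF \<beta> x]] by blast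
  then obtain c where c: "0 < c" "ennreal c < Kstar \<beta> x" by (cases y) auto
  obtain \<delta> where \<delta>: "\<delta> > 0" "\<And>\<iota>. 0 < \<iota> \<Longrightarrow> \<iota> < \<delta> \<Longrightarrow> ennreal c < Kstar (\<beta>' \<iota>) x"
    using order_tendstoD(1)[OF Kstar_lim[of x] c(2)] unfolding eventually_at_right_field by auto
  show ?thesis
  proof (rule tendsto_at_right_sequentially[OF \<delta>(1)])
    fix S :: "nat \<Rightarrow> real" assume S: "\<And>n. 0 < S n" "\<And>n. S n < \<delta>" "S \<longlonglongrightarrow> 0"
    then have "filterlim S (at_right 0) sequentially"
      by (intro tendsto_imp_filterlim_at_right) auto
    then show "(\<lambda>n. Ffun (\<beta>' (S n)) a x) \<longlonglongrightarrow> Ffun \<beta> a x"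
      using \<delta>(2)[OF S(1,2)] c(1)
      by (intro Ffun_tendsto_sequentially filterlim_compose[OF Kstar_lim]) (auto intro: less_imp_le)
  qed
qed

lemma Finv_tendsto:
  fixes \<beta>' :: "real \<Rightarrow> real \<Rightarrow> real"
  assumes \<beta>: "admissible_beta_above a \<beta>" and \<beta>': "\<And>\<iota>. \<iota> > 0 \<Longrightarrow> admissible_beta_above a (\<beta>' \<iota>)"
    and le: "\<And>\<iota> s. \<iota> > 0 \<Longrightarrow> s > 0 \<Longrightarrow> \<beta> s \<le> \<beta>' \<iota> s"
    and lim: "\<And>s. s > 0 \<Longrightarrow> ((\<lambda>\<iota>. \<beta>' \<iota> s) \<longlongrightarrow> \<beta> s) (at_right 0)"
    and t: "0 \<le> t"
  shows "((\<lambda>\<iota>. Finv (\<beta>' \<iota>) a t) \<longlongrightarrow> Finv \<beta> a t) (at_right 0)"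
proof (rule order_tendstoI)
  fix c assume c: "c < Finv \<beta> a t"
  show "\<forall>\<^sub>F \<iota> in at_right 0. c < Finv (\<beta>' \<iota>) a t"
    using eventually_at_right_less[of 0]
  proof eventually_elim
    case (elim \<iota>)
    show ?case using Finv_mono_beta[OF \<beta> \<beta>'[OF elim] le[OF elim] t] c by linarith
  qed
next
  fix c assume c: "Finv \<beta> a t < c"
  show "\<forall>\<^sub>F \<iota> in at_right 0. Finv (\<beta>' \<iota>) a t < c"
  proof (cases "a < c")
    case True
    show ?thesis
      using eventually_at_right_less[of 0]
    proof eventually_elim
      case (elim \<iota>)
      show ?case using Finv_mem[OF \<beta>'[OF elim] t] True by simp
    qed
  next
    case False
    then have c_mem: "c \<in> {0<..a}" using c Finv_mem[OF \<beta> t] by auto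
    then have "Ffun \<beta> a c < ennreal t" using Finv_less_iff[OF \<beta> t] c by simp
    moreover have "(\<beta> \<longlongrightarrow> 0) at_top" using \<beta> by (simp add: admissible_beta_above_def admissible_beta_def)
    ultimately have "\<forall>\<^sub>F \<iota> in at_right 0. Ffun (\<beta>' \<iota>) a c < ennreal t"
      using c_mem by (intro order_tendstoD(2)[OF Ffun_tendsto[OF _ le lim]]) auto
    with eventually_at_right_less[of 0] show ?thesis
    proof eventually_elim
      case (elim \<iota>)
      then show ?case using Finv_less_iff[OF \<beta>'[OF elim(1)] t c_mem] by simp
    qed
  qed
qed

lemma SUP_diff_tendsto_zero_of_decseq:
  fixes f :: "'i \<Rightarrow> nat \<Rightarrow> real" and g :: "nat \<Rightarrow> real"
  assumes le: "\<forall>\<^sub>F i in F. \<forall>n. g n \<le> f i n"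
    and dec: "\<forall>\<^sub>F i in F. decseq (f i)"
    and g_nonneg: "\<And>n. 0 \<le> g n" and g: "g \<longlonglongrightarrow> 0"
    and lim: "\<And>n. ((\<lambda>i. f i n) \<longlongrightarrow> g n) F"
  shows "((\<lambda>i. SUP n. f i n - g n) \<longlongrightarrow> 0) F"
proof (rule order_tendstoI)
  have bdd: "bdd_above (range (\<lambda>n. f i n - g n))" if "decseq (f i)" for i
  proof (rule bdd_aboveI2)
    fix n show "f i n - g n \<le> f i 0"
      using decseqD[OF that, of 0 n] g_nonneg[of n] by simp
  qed
  fix c :: real assume "c < 0"
  from le dec show "\<forall>\<^sub>F i in F. c < (SUP n. f i n - g n)"
  proof eventually_elim
    case (elim i)
    have "0 \<le> f i 0 - g 0" using elim by simp
    also have "\<dots> \<le> (SUP n. f i n - g n)" by (rule cSUP_upper[OF _ bdd[OF elim(2)]]) simp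
    finally show ?case using \<open>c < 0\<close> by simp
  qed
next
  fix \<epsilon> :: real assume "0 < \<epsilon>"
  define e where "e = \<epsilon> / 3"
  have "e > 0" using \<open>0 < \<epsilon>\<close> by (simp add: e_def)
  obtain N where N: "g N < e"
    using order_tendstoD(2)[OF g \<open>e > 0\<close>] by (auto simp: eventually_sequentially)
  have "\<forall>\<^sub>F i in F. \<forall>n\<in>{..N}. f i n < g n + e"
    using \<open>e > 0\<close> by (intro eventually_ball_finite ballI order_tendstoD(2)[OF lim]) auto
  with dec show "\<forall>\<^sub>F i in F. (SUP n. f i n - g n) < \<epsilon>"
  proof eventually_elim
    case (elim i)
    have "f i n - g n \<le> 2 * e" for n
    proof (cases "n \<le> N")
      case True
      then have "f i n < g n + e" using elim(2) by simp
      then show ?thesis using \<open>e > 0\<close> by simp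
    next
      case False
      then have "f i n \<le> f i N" using decseqD[OF elim(1)] by simp
      moreover have "f i N < g N + e" using elim(2) by simp
      ultimately show ?thesis using N g_nonneg[of n] by linarith
    qed
    then have "(SUP n. f i n - g n) \<le> 2 * e" by (intro cSUP_least) auto
    then show ?case using \<open>0 < \<epsilon>\<close> by (simp add: e_def)
  qed
qed

theorem proposition41:
  fixes M :: "'a measure"
    and P1 :: "'a \<Rightarrow> 'a measure"
    and P2 :: "real \<Rightarrow> 'a \<Rightarrow> 'a measure"
    and \<Phi> :: "('a \<Rightarrow> real) \<Rightarrow> ennreal"
    and a :: real
    and \<beta>1 :: "real \<Rightarrow> real"
    and \<beta>2 :: "real \<Rightarrow> real \<Rightarrow> real"
  assumes prob: "prob_space M"
    and P1_kernel: "invariant_markov_kernel M P1"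
    and P2_kernel: "\<And>\<iota>. \<iota> > 0 \<Longrightarrow> invariant_markov_kernel M (P2 \<iota>)"
    and Phi_ae: "\<And>f g. f \<in> L2 M \<Longrightarrow> g \<in> L2 M \<Longrightarrow> (AE x in M. f x = g x) \<Longrightarrow> \<Phi> f = \<Phi> g"
    and a_pos: "0 < a"
    and a_def: "(SUP f\<in>{f \<in> L20 M. \<not> (AE x in M. f x = 0)}. ennreal (sqnorm M f) / \<Phi> f) = ennreal a"
    and Phi_hom: "\<And>c f. f \<in> L2 M \<Longrightarrow> \<Phi> (\<lambda>x. c * f x) = ennreal (c\<^sup>2) * \<Phi> f"
    and Phi_var: "\<And>f. f \<in> L2 M \<Longrightarrow>
        ennreal (sqnorm M (\<lambda>x. f x - (\<integral>y. f y \<partial>M)))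
          \<le> ennreal a * \<Phi> (\<lambda>x. f x - (\<integral>y. f y \<partial>M))"
    and Phi_nonexp1: "\<And>n f. f \<in> L2 M \<Longrightarrow> \<Phi> ((kapply P1 ^^ n) f) \<le> \<Phi> f"
    and Phi_nonexp2: "\<And>\<iota> n f. \<iota> > 0 \<Longrightarrow> f \<in> L2 M \<Longrightarrow> \<Phi> ((kapply (P2 \<iota>) ^^ n) f) \<le> \<Phi> f"
    and beta1_adm: "admissible_beta \<beta>1"
    and beta2_adm: "\<And>\<iota>. \<iota> > 0 \<Longrightarrow> admissible_beta (\<beta>2 \<iota>)"
    and SPI1: "super_poincare M P1 \<beta>1 \<Phi>"
    and SPI2: "\<And>\<iota>. \<iota> > 0 \<Longrightarrow> super_poincare M (P2 \<iota>) (\<beta>2 \<iota>) \<Phi>"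
    and beta_le: "\<And>\<iota> s. \<iota> > 0 \<Longrightarrow> s > 0 \<Longrightarrow> \<beta>1 s \<le> \<beta>2 \<iota> s"
    and beta_lim: "\<And>s. s > 0 \<Longrightarrow> ((\<lambda>\<iota>. \<beta>2 \<iota> s) \<longlongrightarrow> \<beta>1 s) (at_right 0)"
  shows "(\<forall>\<iota>>0. \<forall>n::nat. Finv (\<beta>2 \<iota>) a (real n) \<ge> Finv \<beta>1 a (real n))
    \<and> ((\<lambda>\<iota>. SUP n::nat. Finv (\<beta>2 \<iota>) a (real n) - Finv \<beta>1 a (real n)) \<longlongrightarrow> 0) (at_right 0)"
proof -
  have \<beta>1: "admissible_beta_above a \<beta>1"
    using a_pos beta1_adm super_poincare_beta_lower_bound[OF a_def SPI1]
    by (auto simp: admissible_beta_above_def admissible_beta_def)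
  have \<beta>2: "admissible_beta_above a (\<beta>2 \<iota>)" if "\<iota> > 0" for \<iota>
    using a_pos beta2_adm[OF that] super_poincare_beta_lower_bound[OF a_def SPI2[OF that]]
    by (auto simp: admissible_beta_above_def admissible_beta_def)
  have mono: "Finv \<beta>1 a (real n) \<le> Finv (\<beta>2 \<iota>) a (real n)" if "\<iota> > 0" for \<iota> n
    using Finv_mono_beta[OF \<beta>1 \<beta>2[OF that] beta_le[OF that]] by simp
  have "((\<lambda>\<iota>. SUP n::nat. Finv (\<beta>2 \<iota>) a (real n) - Finv \<beta>1 a (real n)) \<longlongrightarrow> 0) (at_right 0)"
  proof (rule SUP_diff_tendsto_zero_of_decseq)
    show "\<forall>\<^sub>F \<iota> in at_right 0. \<forall>n. Finv \<beta>1 a (real n) \<le> Finv (\<beta>2 \<iota>) a (real n)"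
      using eventually_at_right_less[of 0] by eventually_elim (use mono in auto)
    show "\<forall>\<^sub>F \<iota> in at_right 0. decseq (\<lambda>n. Finv (\<beta>2 \<iota>) a (real n))"
      using eventually_at_right_less[of 0]
      by eventually_elim (auto simp: decseq_def intro!: Finv_antimono \<beta>2)
    show "0 \<le> Finv \<beta>1 a (real n)" for n
      using Finv_mem[OF \<beta>1, of "real n"] by simp
    show "(\<lambda>n. Finv \<beta>1 a (real n)) \<longlonglongrightarrow> 0"
      using filterlim_compose[OF Finv_tendsto_zero[OF \<beta>1] filterlim_real_sequentially] .
    show "((\<lambda>\<iota>. Finv (\<beta>2 \<iota>) a (real n)) \<longlongrightarrow> Finv \<beta>1 a (real n)) (at_right 0)" for n
      by (rule Finv_tendsto[OF \<beta>1 \<beta>2 beta_le beta_lim]) simp_all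
  qed
  with mono show ?thesis by blast
qed

end
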